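(* Let $G$ be a finite graph with positive weights $w$ on its edges. For $i=1,\dots,k$ let $H_i$ be a subgraph of $G$ with positive weights $w_i$ on its edges, such that (i) there is a constant $m$ with $|\{i: x\in V(H_i)\}|=m$ for every $x\in V(G)$; and (ii) for every $e\in E(G)$, $w(e)\ge \frac1m\sum_{i:\,e\in E(H_i)} w_i(e)$. Then for all $t>0$, $$\frac{1}{|G|}\sum_{x\in V(G)}p_t(x;G)\le \frac{1}{\sum_{j=1}^k|H_j|}\sum_{i=1}^k\sum_{x\in V(H_i)}p_t(x;H_i).$$
   Context: For a graph $K$ with positive edge weights, its Laplacian $\Delta_K$ has off-diagonal entries $\Delta_K(x,y)=-w(e)$ when $e$ is the edge joining $x$ and $y$ with weight $w(e)$, all other off-diagonal entries $0$, and row sums $0$. $p_t(x;K)$, the probability that continuous-time random walk on the weighted graph $K$ started at $x$ is at $x$ at time $t$, is the $(x,x)$-entry of $e^{-t\Delta_K}$ (with $\Delta_{H_i}$ formed using the weights $w_i$). $|K|$ is the number of vertices. *)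

theory Defs
  imports Complex_Main
begin

text \<open>Matrices indexed by V are functions
'a \<Rightarrow> 'a \<Rightarrow> real; only entries in V \<times> V are relevant.\<close>

definition wgraph :: "'a set \<Rightarrow> 'a set set \<Rightarrow> ('a set \<Rightarrow> real) \<Rightarrow> bool" where
  "wgraph V E w \<longleftrightarrow> finite V \<and>
     (\<forall>e\<in>E. \<exists>x y. x \<in> V \<and> y \<in> V \<and> x \<noteq> y \<and> e = {x, y}) \<and>
     (\<forall>e\<in>E. w e > 0)"

text \<open>Laplacian: off-diagonal entry -w(e) if e={x,y} is an edge, else 0;
diagonal entry makes the row sum 0.\<close>
definition laplacian :: "'a set \<Rightarrow> 'a set set \<Rightarrow> ('a set \<Rightarrow> real) \<Rightarrow> 'a \<Rightarrow> 'a \<Rightarrow> real" where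
  "laplacian V E w x y =
     (if x = y then (\<Sum>z\<in>V - {x}. if {x, z} \<in> E then w {x, z} else 0)
      else if {x, y} \<in> E then - w {x, y} else 0)"

definition mat_mult :: "'a set \<Rightarrow> ('a \<Rightarrow> 'a \<Rightarrow> real) \<Rightarrow> ('a \<Rightarrow> 'a \<Rightarrow> real) \<Rightarrow> 'a \<Rightarrow> 'a \<Rightarrow> real" where
  "mat_mult V A B x y = (\<Sum>z\<in>V. A x z * B z y)"

fun mat_pow :: "'a set \<Rightarrow> ('a \<Rightarrow> 'a \<Rightarrow> real) \<Rightarrow> nat \<Rightarrow> 'a \<Rightarrow> 'a \<Rightarrow> real" where
  "mat_pow V A 0 = (\<lambda>x y. if x = y then 1 else 0)"
| "mat_pow V A (Suc n) = mat_mult V A (mat_pow V A n)"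

definition mat_exp :: "'a set \<Rightarrow> ('a \<Rightarrow> 'a \<Rightarrow> real) \<Rightarrow> 'a \<Rightarrow> 'a \<Rightarrow> real" where
  "mat_exp V A x y = (\<Sum>n. mat_pow V A n x y / fact n)"

definition heat_return :: "'a set \<Rightarrow> 'a set set \<Rightarrow> ('a set \<Rightarrow> real) \<Rightarrow> real \<Rightarrow> 'a \<Rightarrow> real" where
  "heat_return V E w t x = mat_exp V (\<lambda>a b. - t * laplacian V E w a b) x x"

end

theory Submission
  imports Defs "HOL-Analysis.Analysis"
begin

text \<open>Let v_j be an orthonormal eigenbasis of -t\<Delta>_G with eigenvalues \<beta>_j, so that
\<Sum>_x p_t(x;G) = \<Sum>_j exp \<beta>_j. By (i) the restrictions of the unit vector v_j to the H_i have total
squared norm m, and by (ii) m \<beta>_j \<le> \<Sum>_i \<langle>v_j, -t\<Delta>_{H_i} v_j\<rangle>. Expanding v_j in eigenbases of the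
-t\<Delta>_{H_i} and applying Jensen's inequality to exp, with the squared coefficients as weights, gives
m exp \<beta>_j \<le> \<Sum>_i \<langle>v_j, exp(-t\<Delta>_{H_i}) v_j\<rangle>. Summing over the basis v_j turns the right-hand side
into \<Sum>_i tr exp(-t\<Delta>_{H_i}), and (i) also gives \<Sum>_i |H_i| = m |G|.

The spectral theorem for symmetric matrices indexed by a finite set is obtained variationally:
a maximiser of the quadratic form on the unit vectors orthogonal to the eigenvectors found so
far is again an eigenvector.\<close>

section \<open>Inner products and orthonormal families on a finite index set\<close>

definition inner_on :: "'a set \<Rightarrow> ('a \<Rightarrow> real) \<Rightarrow> ('a \<Rightarrow> real) \<Rightarrow> real" where
  "inner_on S f g = (\<Sum>x\<in>S. f x * g x)"

definition orthonormal_on :: "'a set \<Rightarrow> (nat \<Rightarrow> 'a \<Rightarrow> real) \<Rightarrow> nat \<Rightarrow> bool" where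
  "orthonormal_on S v r \<longleftrightarrow> (\<forall>j<r. \<forall>k<r. inner_on S (v j) (v k) = (if j = k then 1 else 0))"

definition eigenvectors_on ::
    "'a set \<Rightarrow> ('a \<Rightarrow> 'a \<Rightarrow> real) \<Rightarrow> (nat \<Rightarrow> 'a \<Rightarrow> real) \<Rightarrow> (nat \<Rightarrow> real) \<Rightarrow> nat \<Rightarrow> bool" where
  "eigenvectors_on S A v lam r \<longleftrightarrow> orthonormal_on S v r \<and>
     (\<forall>j<r. \<forall>x\<in>S. (\<Sum>y\<in>S. A x y * v j y) = lam j * v j x)"

definition eigenbasis_on ::
    "'a set \<Rightarrow> ('a \<Rightarrow> 'a \<Rightarrow> real) \<Rightarrow> (nat \<Rightarrow> 'a \<Rightarrow> real) \<Rightarrow> (nat \<Rightarrow> real) \<Rightarrow> nat \<Rightarrow> bool" where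
  "eigenbasis_on S A v lam r \<longleftrightarrow> eigenvectors_on S A v lam r \<and>
     (\<forall>x\<in>S. \<forall>y\<in>S. (\<Sum>j<r. v j x * v j y) = (if x = y then 1 else 0))"

definition symmetric_on :: "'a set \<Rightarrow> ('a \<Rightarrow> 'a \<Rightarrow> real) \<Rightarrow> bool" where
  "symmetric_on S A \<longleftrightarrow> (\<forall>x\<in>S. \<forall>y\<in>S. A x y = A y x)"

definition bilinear_form :: "'a set \<Rightarrow> ('a \<Rightarrow> 'a \<Rightarrow> real) \<Rightarrow> ('a \<Rightarrow> real) \<Rightarrow> ('a \<Rightarrow> real) \<Rightarrow> real" where
  "bilinear_form S A f g = (\<Sum>x\<in>S. \<Sum>y\<in>S. A x y * f x * g y)"

abbreviation quad_form :: "'a set \<Rightarrow> ('a \<Rightarrow> 'a \<Rightarrow> real) \<Rightarrow> ('a \<Rightarrow> real) \<Rightarrow> real" where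
  "quad_form S A f \<equiv> bilinear_form S A f f"

lemma inner_on_commute: "inner_on S f g = inner_on S g f"
  unfolding inner_on_def by (simp add: mult.commute)

lemma inner_on_self_nonneg: "inner_on S f f \<ge> 0"
  unfolding inner_on_def by (intro sum_nonneg) auto

lemma inner_on_self_eq_0_iff: "finite S \<Longrightarrow> inner_on S f f = 0 \<longleftrightarrow> (\<forall>x\<in>S. f x = 0)"
  unfolding inner_on_def by (subst sum_nonneg_eq_0_iff) auto

lemma inner_on_cong:
  "(\<And>x. x \<in> S \<Longrightarrow> f x = f' x) \<Longrightarrow> (\<And>x. x \<in> S \<Longrightarrow> g x = g' x) \<Longrightarrow> inner_on S f g = inner_on S f' g'"
  unfolding inner_on_def by (intro sum.cong) auto

lemma inner_on_scale: "inner_on S (\<lambda>x. c * f x) g = c * inner_on S f g"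
  unfolding inner_on_def by (simp add: sum_distrib_left algebra_simps)

lemma inner_on_add_scaled:
  "inner_on S (\<lambda>x. f x + s * h x) g = inner_on S f g + s * inner_on S h g"
  unfolding inner_on_def by (simp add: algebra_simps sum.distrib sum_distrib_left)

lemma inner_on_self_add_scaled:
  "inner_on S (\<lambda>x. f x + s * h x) (\<lambda>x. f x + s * h x) =
    inner_on S f f + 2 * s * inner_on S f h + s\<^sup>2 * inner_on S h h"
  unfolding inner_on_def by (simp add: algebra_simps sum.distrib sum_distrib_left power2_eq_square)

lemma inner_on_diff_sum:
  "inner_on S (\<lambda>x. f x - (\<Sum>j\<in>J. c j * v j x)) h = inner_on S f h - (\<Sum>j\<in>J. c j * inner_on S (v j) h)"
  unfolding inner_on_def
  by (simp add: left_diff_distrib sum_subtractf sum_distrib_left sum_distrib_right sum.swap[of _ J] mult.assoc)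

lemma inner_on_delta: "finite S \<Longrightarrow> y \<in> S \<Longrightarrow> inner_on S (\<lambda>x. if x = y then 1 else 0) h = h y"
  unfolding inner_on_def by (simp add: if_distrib[of "\<lambda>a. a * _"] cong: if_cong)

lemma bilinear_form_commute: "symmetric_on S A \<Longrightarrow> bilinear_form S A f g = bilinear_form S A g f"
  unfolding bilinear_form_def symmetric_on_def
  by (subst sum.swap) (intro sum.cong refl, simp add: mult_ac)

lemma bilinear_form_eq_inner_on:
  assumes "symmetric_on S A"
  shows "bilinear_form S A f g = inner_on S (\<lambda>x. \<Sum>y\<in>S. A x y * f y) g"
proof -
  have "bilinear_form S A f g = bilinear_form S A g f"
    using assms by (rule bilinear_form_commute)
  also have "\<dots> = inner_on S (\<lambda>x. \<Sum>y\<in>S. A x y * f y) g"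
    unfolding bilinear_form_def inner_on_def by (simp add: sum_distrib_left mult_ac)
  finally show ?thesis .
qed

lemma quad_form_cong: "(\<And>x. x \<in> S \<Longrightarrow> f x = g x) \<Longrightarrow> quad_form S A f = quad_form S A g"
  unfolding bilinear_form_def by (intro sum.cong) auto

lemma quad_form_scale: "quad_form S A (\<lambda>x. c * f x) = c\<^sup>2 * quad_form S A f"
  unfolding bilinear_form_def by (simp add: sum_distrib_left power2_eq_square algebra_simps)

lemma quad_form_add_scaled:
  assumes "symmetric_on S A"
  shows "quad_form S A (\<lambda>x. f x + s * h x) =
    quad_form S A f + 2 * s * bilinear_form S A f h + s\<^sup>2 * quad_form S A h"
proof -
  have "quad_form S A (\<lambda>x. f x + s * h x) =
      quad_form S A f + s * bilinear_form S A f h + s * bilinear_form S A h f + s\<^sup>2 * quad_form S A h"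
    unfolding bilinear_form_def
    by (simp add: algebra_simps sum.distrib sum_distrib_left power2_eq_square)
  then show ?thesis using bilinear_form_commute[OF assms, of h f] by simp
qed

lemma inner_on_residual_orthogonal:
  assumes "orthonormal_on S v r" "j < r"
  shows "inner_on S (\<lambda>x. f x - (\<Sum>k<r. inner_on S f (v k) * v k x)) (v j) = 0"
proof -
  have "(\<Sum>k<r. inner_on S f (v k) * inner_on S (v k) (v j)) = (\<Sum>k<r. if k = j then inner_on S f (v k) else 0)"
    using assms unfolding orthonormal_on_def by (intro sum.cong) auto
  also have "\<dots> = inner_on S f (v j)" using assms(2) by simp
  finally show ?thesis by (simp add: inner_on_diff_sum)
qed

lemma bessel_inequality:
  assumes "orthonormal_on S v r"
  shows "(\<Sum>j<r. (inner_on S f (v j))\<^sup>2) \<le> inner_on S f f"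
proof -
  define g where "g = (\<lambda>x. f x - (\<Sum>k<r. inner_on S f (v k) * v k x))"
  have g_orth: "inner_on S (v j) g = 0" if "j < r" for j
    using inner_on_residual_orthogonal[OF assms that] unfolding g_def by (simp add: inner_on_commute)
  have "inner_on S g g = inner_on S f g"
    using g_orth unfolding g_def by (subst inner_on_diff_sum) simp
  also have "\<dots> = inner_on S f f - (\<Sum>j<r. (inner_on S f (v j))\<^sup>2)"
    unfolding g_def by (subst inner_on_commute, subst inner_on_diff_sum) (simp add: power2_eq_square inner_on_commute)
  finally show ?thesis using inner_on_self_nonneg[of S g] by simp
qed

lemma orthonormal_on_card_le:
  assumes "finite S" "orthonormal_on S v r"
  shows "r \<le> card S"
proof -
  have "real r = (\<Sum>j<r. inner_on S (v j) (v j))"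
    using assms(2) unfolding orthonormal_on_def by simp
  also have "\<dots> = (\<Sum>x\<in>S. \<Sum>j<r. (v j x)\<^sup>2)"
    unfolding inner_on_def by (simp add: sum.swap[of _ S] power2_eq_square)
  also have "\<dots> \<le> (\<Sum>x\<in>S. 1)"
  proof (rule sum_mono)
    fix x assume x: "x \<in> S"
    let ?e = "\<lambda>y. if y = x then 1 else 0"
    have "(\<Sum>j<r. (v j x)\<^sup>2) \<le> inner_on S ?e ?e"
      using bessel_inequality[OF assms(2), of ?e] by (simp add: inner_on_delta[OF assms(1) x])
    then show "(\<Sum>j<r. (v j x)\<^sup>2) \<le> 1"
      by (simp add: inner_on_delta[OF assms(1) x])
  qed
  finally show ?thesis by simp
qed

section \<open>The spectral theorem for symmetric matrices\<close>

lemma normalized_on: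
  assumes "inner_on S f f > 0"
  defines "f' \<equiv> \<lambda>x. if x \<in> S then f x / sqrt (inner_on S f f) else 0"
  shows "inner_on S f' f' = 1" and "inner_on S f' g = inner_on S f g / sqrt (inner_on S f f)"
    and "quad_form S A f' = quad_form S A f / inner_on S f f" and "\<forall>x. x \<notin> S \<longrightarrow> f' x = 0"
proof -
  let ?c = "1 / sqrt (inner_on S f f)"
  have f': "x \<in> S \<Longrightarrow> f' x = ?c * f x" for x unfolding f'_def by simp
  have c2: "?c\<^sup>2 = 1 / inner_on S f f" using assms(1) by (simp add: power_divide)
  have g: "inner_on S f' h = inner_on S f h / sqrt (inner_on S f f)" for h
  proof -
    have "inner_on S f' h = inner_on S (\<lambda>x. ?c * f x) h"
      by (rule inner_on_cong) (simp_all add: f')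
    also have "\<dots> = ?c * inner_on S f h" by (rule inner_on_scale)
    finally show ?thesis by simp
  qed
  then show "inner_on S f' g = inner_on S f g / sqrt (inner_on S f f)" .
  have "inner_on S f' f' = ?c * inner_on S f f'" using g[of f'] by (simp add: inner_on_commute)
  also have "\<dots> = ?c\<^sup>2 * inner_on S f f"
    using g[of f] by (simp add: inner_on_commute power2_eq_square)
  finally show "inner_on S f' f' = 1" using c2 assms(1) by simp
  have "quad_form S A f' = quad_form S A (\<lambda>x. ?c * f x)"
    by (rule quad_form_cong) (simp add: f')
  also have "\<dots> = ?c\<^sup>2 * quad_form S A f" by (rule quad_form_scale)
  finally show "quad_form S A f' = quad_form S A f / inner_on S f f" using c2 by simp
  show "\<forall>x. x \<notin> S \<longrightarrow> f' x = 0" unfolding f'_def by simp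
qed

lemma continuous_on_coordinate: "continuous_on K (\<lambda>f :: 'a \<Rightarrow> real. f x)"
  using continuous_on_subset[of UNIV "\<lambda>f :: 'a \<Rightarrow> real. f x"] by simp

text \<open>Vectors are taken to vanish outside \<open>S\<close>, which makes the unit sphere compact in the product
topology on \<open>'a \<Rightarrow> real\<close>.\<close>

lemma compact_unit_sphere_orthogonal_on:
  assumes "finite S"
  shows "compact {f. (\<forall>x. x \<notin> S \<longrightarrow> f x = 0) \<and> inner_on S f f = 1 \<and> (\<forall>j<r. inner_on S f (v j) = 0)}"
    (is "compact ?K")
proof -
  define B where "B = PiE UNIV (\<lambda>x. if x \<in> S then {-1..1} else {0::real})"
  have "compactin (product_topology (\<lambda>i. euclidean) UNIV) B"
    unfolding B_def by (subst compactin_PiE) auto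
  then have "compact B" by (simp add: euclidean_product_topology)
  define C where "C = {f. inner_on S f f = 1} \<inter> (\<Inter>j\<in>{..<r}. {f. inner_on S f (v j) = 0})"
  have "closed C" unfolding C_def inner_on_def
    by (intro closed_Int closed_INT ballI closed_Collect_eq continuous_intros continuous_on_coordinate)
  have "?K = B \<inter> C"
  proof safe
    fix f assume f: "\<forall>x. x \<notin> S \<longrightarrow> f x = 0" "inner_on S f f = 1" "\<forall>j<r. inner_on S f (v j) = 0"
    then show "f \<in> C" unfolding C_def by auto
    have "\<bar>f x\<bar> \<le> 1" if "x \<in> S" for x
    proof -
      have "(f x)\<^sup>2 \<le> (\<Sum>y\<in>S. (f y)\<^sup>2)"
        using assms that by (intro member_le_sum) auto
      also have "\<dots> = 1" using f(2) unfolding inner_on_def by (simp add: power2_eq_square)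
      finally show ?thesis by (simp add: abs_square_le_1)
    qed
    then show "f \<in> B" unfolding B_def using f(1) by (auto simp: PiE_def Pi_def abs_le_iff)
  next
    fix f x assume f: "f \<in> B" and "x \<notin> S"
    have "f x \<in> (if x \<in> S then {-1..1} else {0})"
      by (rule PiE_mem[OF f[unfolded B_def]]) simp
    with \<open>x \<notin> S\<close> show "f x = 0" by simp
  qed (simp_all add: C_def)
  with \<open>compact B\<close> \<open>closed C\<close> show ?thesis by (simp add: compact_Int_closed)
qed

lemma rayleigh_maximizer_exists:
  assumes fin: "finite S" and g: "inner_on S g g > 0" "\<forall>j<r. inner_on S g (v j) = 0"
  obtains u where "inner_on S u u = 1" "\<forall>j<r. inner_on S u (v j) = 0"
    "\<And>f. \<forall>j<r. inner_on S f (v j) = 0 \<Longrightarrow> quad_form S A f \<le> quad_form S A u * inner_on S f f"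
proof -
  define K where "K = {f. (\<forall>x. x \<notin> S \<longrightarrow> f x = 0) \<and> inner_on S f f = 1 \<and> (\<forall>j<r. inner_on S f (v j) = 0)}"
  have normalized_in_K: "(\<lambda>x. if x \<in> S then f x / sqrt (inner_on S f f) else 0) \<in> K"
    if "inner_on S f f > 0" "\<forall>j<r. inner_on S f (v j) = 0" for f
    unfolding K_def mem_Collect_eq using that(2) by (simp add: normalized_on(1,2,4)[OF that(1)])
  have "compact K" unfolding K_def by (rule compact_unit_sphere_orthogonal_on[OF fin])
  moreover have "K \<noteq> {}" using normalized_in_K[OF g] by blast
  moreover have "continuous_on K (quad_form S A)"
    unfolding bilinear_form_def by (intro continuous_intros continuous_on_coordinate)
  ultimately obtain u where u: "u \<in> K" and u_max: "\<And>f. f \<in> K \<Longrightarrow> quad_form S A f \<le> quad_form S A u"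
    by (meson continuous_attains_sup)
  show ?thesis
  proof (rule that[of u])
    show "inner_on S u u = 1" "\<forall>j<r. inner_on S u (v j) = 0"
      using u unfolding K_def by auto
    fix f assume f: "\<forall>j<r. inner_on S f (v j) = 0"
    show "quad_form S A f \<le> quad_form S A u * inner_on S f f"
    proof (cases "inner_on S f f = 0")
      case True
      then have "\<forall>x\<in>S. f x = 0" using inner_on_self_eq_0_iff[OF fin] by blast
      then have "quad_form S A f = 0" unfolding bilinear_form_def by simp
      then show ?thesis using True by simp
    next
      case False
      then have pos: "inner_on S f f > 0" using inner_on_self_nonneg[of S f] by linarith
      have "quad_form S A f / inner_on S f f \<le> quad_form S A u"
        using u_max[OF normalized_in_K[OF pos f]] unfolding normalized_on(3)[OF pos] .
      then show ?thesis using pos by (simp add: field_simps)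
    qed
  qed
qed

lemma nonneg_quadratic_imp_linear_coeff_0:
  fixes b c :: real
  assumes "\<And>s. 0 \<le> 2 * s * b + s\<^sup>2 * c"
  shows "b = 0"
proof (rule ccontr)
  assume "b \<noteq> 0"
  have "c \<ge> 0" using assms[of 1] assms[of "-1"] by simp
  define s where "s = - b / (c + 1)"
  have sc: "s * (c + 1) = - b" unfolding s_def using \<open>c \<ge> 0\<close> by simp
  have "(c + 1)\<^sup>2 * (2 * s * b + s\<^sup>2 * c) = 2 * b * (c + 1) * (s * (c + 1)) + (s * (c + 1))\<^sup>2 * c"
    by (simp add: power2_eq_square algebra_simps)
  also have "\<dots> = - (b\<^sup>2 * (c + 2))"
    unfolding sc by (simp add: power2_eq_square algebra_simps)
  finally have "(c + 1)\<^sup>2 * (2 * s * b + s\<^sup>2 * c) = - (b\<^sup>2 * (c + 2))" .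
  moreover have "b\<^sup>2 * (c + 2) > 0" using \<open>b \<noteq> 0\<close> \<open>c \<ge> 0\<close> by simp
  moreover have "0 \<le> (c + 1)\<^sup>2 * (2 * s * b + s\<^sup>2 * c)" using assms[of s] by simp
  ultimately show False by linarith
qed

text \<open>The first variation of the maximiser \<open>u\<close> vanishes in every direction orthogonal to the
\<open>v\<^sub>j\<close>; since their span is invariant under \<open>A\<close>, the residual \<open>A u - \<mu> u\<close> is such a direction
and is orthogonal to itself.\<close>

lemma rayleigh_maximizer_is_eigenvector:
  assumes fin: "finite S" and sym: "symmetric_on S A" and ev: "eigenvectors_on S A v lam r"
    and u: "inner_on S u u = 1" "\<forall>j<r. inner_on S u (v j) = 0"
    and u_max: "\<And>f. \<forall>j<r. inner_on S f (v j) = 0 \<Longrightarrow> quad_form S A f \<le> quad_form S A u * inner_on S f f"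
  shows "\<forall>x\<in>S. (\<Sum>y\<in>S. A x y * u y) = quad_form S A u * u x"
proof -
  let ?\<mu> = "quad_form S A u"
  have first_variation: "bilinear_form S A u h = ?\<mu> * inner_on S u h"
    if h: "\<forall>j<r. inner_on S h (v j) = 0" for h
  proof -
    have "0 \<le> 2 * s * (?\<mu> * inner_on S u h - bilinear_form S A u h) + s\<^sup>2 * (?\<mu> * inner_on S h h - quad_form S A h)"
      for s
    proof -
      have "\<forall>j<r. inner_on S (\<lambda>x. u x + s * h x) (v j) = 0"
        using u(2) h by (simp add: inner_on_add_scaled)
      then have "quad_form S A (\<lambda>x. u x + s * h x) \<le> ?\<mu> * inner_on S (\<lambda>x. u x + s * h x) (\<lambda>x. u x + s * h x)"
        by (rule u_max)
      then show ?thesis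
        unfolding quad_form_add_scaled[OF sym] inner_on_self_add_scaled u(1) by (simp add: algebra_simps)
    qed
    then show ?thesis using nonneg_quadratic_imp_linear_coeff_0 by fastforce
  qed
  define h where "h = (\<lambda>x. (\<Sum>y\<in>S. A x y * u y) + (- ?\<mu>) * u x)"
  have "inner_on S h (v j) = 0" if "j < r" for j
  proof -
    have Av: "\<forall>x\<in>S. (\<Sum>y\<in>S. A x y * v j y) = lam j * v j x"
      using ev that unfolding eigenvectors_on_def by blast
    have "inner_on S (\<lambda>x. \<Sum>y\<in>S. A x y * u y) (v j) = bilinear_form S A u (v j)"
      by (simp add: bilinear_form_eq_inner_on[OF sym])
    also have "\<dots> = bilinear_form S A (v j) u" by (rule bilinear_form_commute[OF sym])
    also have "\<dots> = inner_on S (\<lambda>x. lam j * v j x) u"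
      unfolding bilinear_form_eq_inner_on[OF sym] using Av by (intro inner_on_cong) auto
    finally have "inner_on S (\<lambda>x. \<Sum>y\<in>S. A x y * u y) (v j) = 0"
      using u(2) that by (simp add: inner_on_scale inner_on_commute)
    moreover have "inner_on S h (v j) = inner_on S (\<lambda>x. \<Sum>y\<in>S. A x y * u y) (v j) + (- ?\<mu>) * inner_on S u (v j)"
      unfolding h_def by (rule inner_on_add_scaled)
    ultimately show ?thesis using u(2) that by simp
  qed
  then have "bilinear_form S A u h = ?\<mu> * inner_on S u h" by (intro first_variation) blast
  moreover have "inner_on S h g = bilinear_form S A u g + (- ?\<mu>) * inner_on S u g" for g
    unfolding h_def bilinear_form_eq_inner_on[OF sym] by (rule inner_on_add_scaled)
  ultimately have "inner_on S h h = 0" by simp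
  then show ?thesis using inner_on_self_eq_0_iff[OF fin] unfolding h_def by simp
qed

lemma eigenvectors_on_extend:
  assumes "eigenvectors_on S A v lam r" "inner_on S u u = 1" "\<forall>j<r. inner_on S u (v j) = 0"
    and "\<forall>x\<in>S. (\<Sum>y\<in>S. A x y * u y) = \<mu> * u x"
  shows "eigenvectors_on S A (v(r := u)) (lam(r := \<mu>)) (Suc r)"
  unfolding eigenvectors_on_def orthonormal_on_def
proof (intro conjI allI impI ballI)
  fix j k assume "j < Suc r" "k < Suc r"
  moreover have "inner_on S (v j) u = 0" if "j < r" for j
    using assms(3) that by (simp add: inner_on_commute)
  ultimately show "inner_on S ((v(r := u)) j) ((v(r := u)) k) = (if j = k then 1 else 0)"
    using assms(1-3) unfolding eigenvectors_on_def orthonormal_on_def less_Suc_eq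
    by (elim disjE) simp_all
next
  fix j x assume "j < Suc r" "x \<in> S"
  then show "(\<Sum>y\<in>S. A x y * (v(r := u)) j y) = (lam(r := \<mu>)) j * (v(r := u)) j x"
    using assms(1,4) unfolding eigenvectors_on_def less_Suc_eq by (elim disjE) simp_all
qed

lemma eigenbasis_on_if_maximal:
  assumes fin: "finite S" and sym: "symmetric_on S A" and ev: "eigenvectors_on S A v lam r"
    and maximal: "\<And>v' lam'. \<not> eigenvectors_on S A v' lam' (Suc r)"
  shows "eigenbasis_on S A v lam r"
proof -
  have on: "orthonormal_on S v r" using ev unfolding eigenvectors_on_def by blast
  have "(\<Sum>j<r. v j x * v j y) = (if x = y then 1 else 0)" if xy: "x \<in> S" "y \<in> S" for x y
  proof -
    let ?e = "\<lambda>z. if z = y then 1 else 0 :: real"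
    define g where "g = (\<lambda>z. ?e z - (\<Sum>k<r. inner_on S ?e (v k) * v k z))"
    have g_perp: "\<forall>j<r. inner_on S g (v j) = 0"
      unfolding g_def by (intro allI impI inner_on_residual_orthogonal[OF on])
    have "inner_on S g g = 0"
    proof (rule ccontr)
      assume "inner_on S g g \<noteq> 0"
      then have pos: "inner_on S g g > 0" using inner_on_self_nonneg[of S g] by linarith
      obtain u where u: "inner_on S u u = 1" "\<forall>j<r. inner_on S u (v j) = 0"
        and u_max: "\<And>f. \<forall>j<r. inner_on S f (v j) = 0 \<Longrightarrow> quad_form S A f \<le> quad_form S A u * inner_on S f f"
        using rayleigh_maximizer_exists[OF fin pos g_perp, where A = A] by blast
      have "\<forall>z\<in>S. (\<Sum>y\<in>S. A z y * u y) = quad_form S A u * u z"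
        using rayleigh_maximizer_is_eigenvector[OF fin sym ev u u_max] .
      then have "eigenvectors_on S A (v(r := u)) (lam(r := quad_form S A u)) (Suc r)"
        by (rule eigenvectors_on_extend[OF ev u])
      with maximal show False by blast
    qed
    then have "g x = 0" using inner_on_self_eq_0_iff[OF fin] xy(1) by blast
    then show ?thesis unfolding g_def using inner_on_delta[OF fin xy(2)] by (simp add: mult.commute)
  qed
  with ev show ?thesis unfolding eigenbasis_on_def by blast
qed

theorem spectral_theorem_on:
  assumes fin: "finite S" and sym: "symmetric_on S A"
  obtains v lam r where "eigenbasis_on S A v lam r"
proof -
  define R where "R = {r. \<exists>v lam. eigenvectors_on S A v lam r}"
  have "R \<subseteq> {..card S}"
    unfolding R_def eigenvectors_on_def using orthonormal_on_card_le[OF fin] by auto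
  then have "finite R" by (rule finite_subset) simp
  moreover have "0 \<in> R" unfolding R_def eigenvectors_on_def orthonormal_on_def by simp
  ultimately have "Max R \<in> R" by (intro Max_in) auto
  moreover have "Suc (Max R) \<notin> R" using Max_ge[OF \<open>finite R\<close>, of "Suc (Max R)"] by linarith
  ultimately obtain v lam where "eigenvectors_on S A v lam (Max R)" and "\<And>v' lam'. \<not> eigenvectors_on S A v' lam' (Suc (Max R))"
    unfolding R_def by blast
  then show ?thesis using eigenbasis_on_if_maximal[OF fin sym] that by blast
qed

section \<open>Traces of matrix exponentials\<close>

lemma mat_pow_eigenbasis:
  assumes eb: "eigenbasis_on S A v lam r" and x: "x \<in> S" and y: "y \<in> S"
  shows "mat_pow S A n x y = (\<Sum>j<r. lam j ^ n * v j x * v j y)"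
  using x
proof (induction n arbitrary: x)
  case 0
  then show ?case using eb y unfolding eigenbasis_on_def by simp
next
  case (Suc n)
  have Av: "\<forall>j<r. (\<Sum>z\<in>S. A x z * v j z) = lam j * v j x"
    using eb Suc.prems unfolding eigenbasis_on_def eigenvectors_on_def by blast
  have "mat_pow S A (Suc n) x y = (\<Sum>z\<in>S. A x z * (\<Sum>j<r. lam j ^ n * v j z * v j y))"
    using Suc.IH by (simp add: mat_mult_def)
  also have "\<dots> = (\<Sum>j<r. lam j ^ n * v j y * (\<Sum>z\<in>S. A x z * v j z))"
    by (simp add: sum_distrib_left sum_distrib_right mult_ac) (rule sum.swap)
  also have "\<dots> = (\<Sum>j<r. lam j ^ Suc n * v j x * v j y)"
    using Av by (intro sum.cong) (auto simp: mult_ac)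
  finally show ?case .
qed

lemma matrix_eigenbasis:
  assumes fin: "finite S" and eb: "eigenbasis_on S A v lam r" and x: "x \<in> S" and y: "y \<in> S"
  shows "A x y = (\<Sum>j<r. lam j * v j x * v j y)"
proof -
  have "mat_pow S A 1 x y = (\<Sum>z\<in>S. if z = y then A x z else 0)"
    by (simp add: mat_mult_def if_distrib[of "\<lambda>a. _ * a"] cong: if_cong)
  then show ?thesis using mat_pow_eigenbasis[OF eb x y, of 1] fin y by simp
qed

lemma mat_exp_eigenbasis:
  assumes eb: "eigenbasis_on S A v lam r" and x: "x \<in> S" and y: "y \<in> S"
  shows "mat_exp S A x y = (\<Sum>j<r. exp (lam j) * v j x * v j y)"
proof -
  have "(\<lambda>n. mat_pow S A n x y / fact n) = (\<lambda>n. \<Sum>j<r. (lam j ^ n /\<^sub>R fact n) * (v j x * v j y))"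
    using mat_pow_eigenbasis[OF assms] by (simp add: sum_distrib_left divide_inverse mult_ac)
  moreover have "(\<lambda>n. \<Sum>j<r. (lam j ^ n /\<^sub>R fact n) * (v j x * v j y)) sums (\<Sum>j<r. exp (lam j) * (v j x * v j y))"
    by (intro sums_sum sums_mult2 exp_converges)
  ultimately show ?thesis unfolding mat_exp_def by (simp add: sums_iff mult_ac)
qed

lemma trace_mat_exp_eigenbasis:
  assumes "eigenbasis_on S A v lam r"
  shows "(\<Sum>x\<in>S. mat_exp S A x x) = (\<Sum>j<r. exp (lam j))"
proof -
  have "(\<Sum>x\<in>S. mat_exp S A x x) = (\<Sum>j<r. exp (lam j) * inner_on S (v j) (v j))"
    unfolding inner_on_def using mat_exp_eigenbasis[OF assms]
    by (simp add: sum.swap[of _ S] sum_distrib_left mult_ac)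
  also have "\<dots> = (\<Sum>j<r. exp (lam j))"
    using assms unfolding eigenbasis_on_def eigenvectors_on_def orthonormal_on_def by simp
  finally show ?thesis .
qed

lemma quad_form_expansion:
  assumes "\<forall>x\<in>S. \<forall>y\<in>S. B x y = (\<Sum>q<n. c q * W q x * W q y)"
  shows "quad_form S B f = (\<Sum>q<n. c q * (inner_on S f (W q))\<^sup>2)"
proof -
  have "(\<Sum>q<n. c q * (inner_on S f (W q))\<^sup>2) = (\<Sum>q<n. \<Sum>x\<in>S. \<Sum>y\<in>S. c q * W q x * W q y * f x * f y)"
    unfolding inner_on_def power2_eq_square sum_product by (simp add: sum_distrib_left mult_ac)
  also have "\<dots> = (\<Sum>x\<in>S. \<Sum>y\<in>S. \<Sum>q<n. c q * W q x * W q y * f x * f y)"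
    by (subst sum.swap) (intro sum.cong refl sum.swap)
  also have "\<dots> = quad_form S B f"
    unfolding bilinear_form_def using assms by (simp add: sum_distrib_right)
  finally show ?thesis ..
qed

lemma sum_quad_form_eq_trace:
  assumes fin: "finite T" and T: "T \<subseteq> S"
    and complete: "\<forall>x\<in>S. \<forall>y\<in>S. (\<Sum>j<r. v j x * v j y) = (if x = y then 1 else 0)"
  shows "(\<Sum>j<r. quad_form T B (v j)) = (\<Sum>x\<in>T. B x x)"
proof -
  have "(\<Sum>j<r. quad_form T B (v j)) = (\<Sum>x\<in>T. \<Sum>y\<in>T. B x y * (\<Sum>j<r. v j x * v j y))"
    unfolding bilinear_form_def by (simp add: sum.swap[of _ "{..<r}"] sum_distrib_left mult_ac)
  also have "\<dots> = (\<Sum>x\<in>T. \<Sum>y\<in>T. if x = y then B x x else 0)"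
    using complete T by (intro sum.cong refl) (auto simp: subset_iff)
  also have "\<dots> = (\<Sum>x\<in>T. B x x)" using fin by simp
  finally show ?thesis .
qed

lemma parseval_on:
  assumes "finite S" "eigenbasis_on S A W \<mu> n"
  shows "(\<Sum>q<n. (inner_on S f (W q))\<^sup>2) = inner_on S f f"
proof -
  have "quad_form S (\<lambda>x y. if x = y then 1 else 0) f = (\<Sum>q<n. 1 * (inner_on S f (W q))\<^sup>2)"
    using assms(2) unfolding eigenbasis_on_def by (intro quad_form_expansion) simp
  moreover have "quad_form S (\<lambda>x y. if x = y then 1 else 0) f = inner_on S f f"
    unfolding bilinear_form_def inner_on_def using assms(1)
    by (intro sum.cong refl) (simp add: if_distrib[of "\<lambda>a. a * _"] cong: if_cong)
  ultimately show ?thesis by simp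
qed

lemma exp_weighted_mean_le:
  fixes a y :: "'i \<Rightarrow> real"
  assumes fin: "finite J" and a: "\<And>p. p \<in> J \<Longrightarrow> a p \<ge> 0" and s: "(\<Sum>p\<in>J. a p) = s" "s > 0"
  shows "s * exp ((\<Sum>p\<in>J. a p * y p) / s) \<le> (\<Sum>p\<in>J. a p * exp (y p))"
proof -
  have "J \<noteq> {}" using s by auto
  moreover have "(\<Sum>p\<in>J. a p / s) = 1" using s by (simp add: sum_divide_distrib[symmetric])
  ultimately have "exp (\<Sum>p\<in>J. (a p / s) *\<^sub>R y p) \<le> (\<Sum>p\<in>J. a p / s * exp (y p))"
    using a s(2) by (intro convex_on_sum[OF fin _ exp_convex]) auto
  then show ?thesis using s(2)
    by (simp add: sum_divide_distrib[symmetric] field_simps)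
qed

text \<open>Jensen's inequality over all pairs \<open>(i, q)\<close>, weighted by \<open>\<langle>f, W i q\<rangle>\<^sup>2\<close>; by Parseval the
weights add up to \<open>s\<close>.\<close>

lemma exp_quad_form_family_le:
  fixes S :: "'i \<Rightarrow> 'a set" and A :: "'i \<Rightarrow> 'a \<Rightarrow> 'a \<Rightarrow> real"
  assumes I: "finite I" and fin: "\<And>i. i \<in> I \<Longrightarrow> finite (S i)"
    and eb: "\<And>i. i \<in> I \<Longrightarrow> eigenbasis_on (S i) (A i) (W i) (\<mu> i) (n i)"
    and s: "(\<Sum>i\<in>I. inner_on (S i) f f) = s" "s > 0"
  shows "s * exp ((\<Sum>i\<in>I. quad_form (S i) (A i) f) / s) \<le> (\<Sum>i\<in>I. quad_form (S i) (mat_exp (S i) (A i)) f)"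
proof -
  define J where "J = (SIGMA i:I. {..<n i})"
  have J_sum: "(\<Sum>p\<in>J. case_prod g p) = (\<Sum>i\<in>I. \<Sum>q<n i. g i q)" for g :: "'i \<Rightarrow> nat \<Rightarrow> real"
    unfolding J_def using I by (simp add: sum.Sigma)
  define a where "a = (\<lambda>(i, q). (inner_on (S i) f (W i q))\<^sup>2)"
  define y where "y = (\<lambda>(i, q). \<mu> i q)"
  have expansion: "quad_form (S i) B f = (\<Sum>q<n i. c q * (inner_on (S i) f (W i q))\<^sup>2)"
    if "i \<in> I" "\<forall>x\<in>S i. \<forall>z\<in>S i. B x z = (\<Sum>q<n i. c q * W i q x * W i q z)" for i B c
    using quad_form_expansion[OF that(2)] .
  have "(\<Sum>p\<in>J. a p) = s"
    using J_sum[of "\<lambda>i q. (inner_on (S i) f (W i q))\<^sup>2"] parseval_on[OF fin eb] s(1)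
    unfolding a_def by (simp add: case_prod_beta')
  then have "s * exp ((\<Sum>p\<in>J. a p * y p) / s) \<le> (\<Sum>p\<in>J. a p * exp (y p))"
    using I s(2) by (intro exp_weighted_mean_le) (auto simp: J_def a_def)
  moreover have "(\<Sum>p\<in>J. a p * y p) = (\<Sum>i\<in>I. quad_form (S i) (A i) f)"
    using J_sum[of "\<lambda>i q. \<mu> i q * (inner_on (S i) f (W i q))\<^sup>2"]
      expansion[OF _ ballI[OF ballI[OF matrix_eigenbasis[OF fin eb]]]]
    unfolding a_def y_def by (simp add: case_prod_beta' mult.commute)
  moreover have "(\<Sum>p\<in>J. a p * exp (y p)) = (\<Sum>i\<in>I. quad_form (S i) (mat_exp (S i) (A i)) f)"
    using J_sum[of "\<lambda>i q. exp (\<mu> i q) * (inner_on (S i) f (W i q))\<^sup>2"]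
      expansion[OF _ ballI[OF ballI[OF mat_exp_eigenbasis[OF eb]]]]
    unfolding a_def y_def by (simp add: case_prod_beta' mult.commute)
  ultimately show ?thesis by simp
qed

lemma quad_form_eigenvector:
  assumes "eigenvectors_on S A v lam r" "j < r"
  shows "quad_form S A (v j) = lam j"
proof -
  have Av: "\<forall>x\<in>S. (\<Sum>y\<in>S. A x y * v j y) = lam j * v j x" and "inner_on S (v j) (v j) = 1"
    using assms unfolding eigenvectors_on_def orthonormal_on_def by auto
  have "quad_form S A (v j) = (\<Sum>x\<in>S. v j x * (\<Sum>y\<in>S. A x y * v j y))"
    unfolding bilinear_form_def by (simp add: sum_distrib_left mult_ac)
  also have "\<dots> = lam j * inner_on S (v j) (v j)"
    using Av unfolding inner_on_def by (simp add: sum_distrib_left mult_ac)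
  finally show ?thesis using \<open>inner_on S (v j) (v j) = 1\<close> by simp
qed

lemma eigenbasis_on_family:
  assumes "\<And>i. i \<in> I \<Longrightarrow> finite (S i)" "\<And>i. i \<in> I \<Longrightarrow> symmetric_on (S i) (B i)"
  obtains W \<mu> n where "\<forall>i\<in>I. eigenbasis_on (S i) (B i) (W i) (\<mu> i) (n i)"
proof -
  have "\<forall>i\<in>I. \<exists>T. eigenbasis_on (S i) (B i) (fst T) (fst (snd T)) (snd (snd T))"
    using spectral_theorem_on[OF assms] by (metis fst_conv snd_conv)
  then have "\<exists>T. \<forall>i\<in>I. eigenbasis_on (S i) (B i) (fst (T i)) (fst (snd (T i))) (snd (snd (T i)))"
    by (rule bchoice)
  then obtain T where "\<forall>i\<in>I. eigenbasis_on (S i) (B i) (fst (T i)) (fst (snd (T i))) (snd (snd (T i)))" ..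
  then show ?thesis by (rule that[of "\<lambda>i. fst (T i)" "\<lambda>i. fst (snd (T i))" "\<lambda>i. snd (snd (T i))"])
qed

theorem trace_mat_exp_le_average:
  fixes S :: "'i \<Rightarrow> 'a set" and B :: "'i \<Rightarrow> 'a \<Rightarrow> 'a \<Rightarrow> real"
  assumes V: "finite V" "symmetric_on V A"
    and I: "finite I" and S: "\<And>i. i \<in> I \<Longrightarrow> finite (S i)" "\<And>i. i \<in> I \<Longrightarrow> S i \<subseteq> V"
    and B: "\<And>i. i \<in> I \<Longrightarrow> symmetric_on (S i) (B i)"
    and m: "m > 0"
    and cover: "\<And>f. (\<Sum>i\<in>I. inner_on (S i) f f) = m * inner_on V f f"
    and dominate: "\<And>f. m * quad_form V A f \<le> (\<Sum>i\<in>I. quad_form (S i) (B i) f)"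
  shows "m * (\<Sum>x\<in>V. mat_exp V A x x) \<le> (\<Sum>i\<in>I. \<Sum>x\<in>S i. mat_exp (S i) (B i) x x)"
proof -
  obtain v lam r where ebA: "eigenbasis_on V A v lam r" using spectral_theorem_on[OF V] .
  obtain W \<mu> n where "\<forall>i\<in>I. eigenbasis_on (S i) (B i) (W i) (\<mu> i) (n i)"
    using eigenbasis_on_family[of I S B, OF S(1) B] by blast
  then have ebB: "\<And>i. i \<in> I \<Longrightarrow> eigenbasis_on (S i) (B i) (W i) (\<mu> i) (n i)" by blast
  have eigvec: "m * exp (lam j) \<le> (\<Sum>i\<in>I. quad_form (S i) (mat_exp (S i) (B i)) (v j))" if "j < r" for j
  proof -
    have "inner_on V (v j) (v j) = 1"
      using ebA that unfolding eigenbasis_on_def eigenvectors_on_def orthonormal_on_def by auto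
    then have mass: "(\<Sum>i\<in>I. inner_on (S i) (v j) (v j)) = m" using cover by simp
    have "lam j \<le> (\<Sum>i\<in>I. quad_form (S i) (B i) (v j)) / m"
      using dominate[of "v j"] quad_form_eigenvector[of V A v lam r j] ebA that m
      unfolding eigenbasis_on_def by (simp add: field_simps)
    then have "m * exp (lam j) \<le> m * exp ((\<Sum>i\<in>I. quad_form (S i) (B i) (v j)) / m)"
      using m by simp
    also have "\<dots> \<le> (\<Sum>i\<in>I. quad_form (S i) (mat_exp (S i) (B i)) (v j))"
      by (rule exp_quad_form_family_le[OF I S(1) ebB mass m])
    finally show ?thesis .
  qed
  have "m * (\<Sum>x\<in>V. mat_exp V A x x) = (\<Sum>j<r. m * exp (lam j))"
    by (simp add: trace_mat_exp_eigenbasis[OF ebA] sum_distrib_left)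
  also have "\<dots> \<le> (\<Sum>j<r. \<Sum>i\<in>I. quad_form (S i) (mat_exp (S i) (B i)) (v j))"
    using eigvec by (intro sum_mono) simp
  also have "\<dots> = (\<Sum>i\<in>I. \<Sum>j<r. quad_form (S i) (mat_exp (S i) (B i)) (v j))"
    by (rule sum.swap)
  also have "\<dots> = (\<Sum>i\<in>I. \<Sum>x\<in>S i. mat_exp (S i) (B i) x x)"
  proof (rule sum.cong[OF refl])
    fix i assume "i \<in> I"
    with S ebA show "(\<Sum>j<r. quad_form (S i) (mat_exp (S i) (B i)) (v j)) = (\<Sum>x\<in>S i. mat_exp (S i) (B i) x x)"
      unfolding eigenbasis_on_def by (intro sum_quad_form_eq_trace[where S = V]) auto
  qed
  finally show ?thesis .
qed

section \<open>Graph Laplacians\<close>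

definition edge_weight :: "'a set set \<Rightarrow> ('a set \<Rightarrow> real) \<Rightarrow> 'a \<Rightarrow> 'a \<Rightarrow> real" where
  "edge_weight E w x y = (if {x, y} \<in> E then w {x, y} else 0)"

lemma edge_weight_commute: "edge_weight E w x y = edge_weight E w y x"
  unfolding edge_weight_def by (simp add: insert_commute)

lemma wgraph_edge_endpoints: "wgraph V E w \<Longrightarrow> {x, y} \<in> E \<Longrightarrow> x \<in> V \<and> y \<in> V \<and> x \<noteq> y"
  unfolding wgraph_def by (metis doubleton_eq_iff)

lemma edge_weight_eq_0:
  assumes "wgraph V E w" "x = y \<or> x \<notin> V \<or> y \<notin> V"
  shows "edge_weight E w x y = 0"
  using wgraph_edge_endpoints[OF assms(1), of x y] assms(2) unfolding edge_weight_def by auto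

lemma symmetric_on_laplacian: "symmetric_on V (laplacian V E w)"
  unfolding symmetric_on_def laplacian_def by (simp add: insert_commute)

lemma symmetric_on_scale: "symmetric_on S A \<Longrightarrow> symmetric_on S (\<lambda>x y. c * A x y)"
  unfolding symmetric_on_def by simp

lemma quad_form_scale_matrix: "quad_form S (\<lambda>x y. c * A x y) f = c * quad_form S A f"
  unfolding bilinear_form_def by (simp add: sum_distrib_left mult_ac)

lemma laplacian_eq_edge_weight:
  assumes G: "wgraph V E w" and x: "x \<in> V"
  shows "laplacian V E w x y = (if x = y then (\<Sum>z\<in>V. edge_weight E w x z) else 0) - edge_weight E w x y"
proof -
  have "finite V" using G unfolding wgraph_def by blast
  then have "(\<Sum>z\<in>V. edge_weight E w x z) = (\<Sum>z\<in>V - {x}. edge_weight E w x z)"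
    using x edge_weight_eq_0[OF G] by (simp add: sum.remove)
  then show ?thesis
    unfolding laplacian_def using edge_weight_eq_0[OF G, of x x] by (auto simp: edge_weight_def)
qed

lemma quad_form_laplacian:
  assumes G: "wgraph V E w"
  shows "quad_form V (laplacian V E w) f = (1/2) * (\<Sum>x\<in>V. \<Sum>y\<in>V. edge_weight E w x y * (f x - f y)\<^sup>2)"
proof -
  have fin: "finite V" using G unfolding wgraph_def by blast
  let ?d = "\<lambda>x. \<Sum>z\<in>V. edge_weight E w x z"
  have "quad_form V (laplacian V E w) f =
      (\<Sum>x\<in>V. \<Sum>y\<in>V. ((if x = y then ?d x else 0) - edge_weight E w x y) * f x * f y)"
    unfolding bilinear_form_def using laplacian_eq_edge_weight[OF G] by (intro sum.cong refl) auto
  also have "\<dots> = (\<Sum>x\<in>V. ?d x * f x * f x) - (\<Sum>x\<in>V. \<Sum>y\<in>V. edge_weight E w x y * f x * f y)"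
    using fin by (simp add: left_diff_distrib sum_subtractf if_distrib[of "\<lambda>a. a * _"] cong: if_cong)
  finally have Q: "quad_form V (laplacian V E w) f =
      (\<Sum>x\<in>V. ?d x * f x * f x) - (\<Sum>x\<in>V. \<Sum>y\<in>V. edge_weight E w x y * f x * f y)" .
  have "(\<Sum>x\<in>V. \<Sum>y\<in>V. edge_weight E w x y * (f x - f y)\<^sup>2) =
        (\<Sum>x\<in>V. \<Sum>y\<in>V. edge_weight E w x y * f x * f x) + (\<Sum>x\<in>V. \<Sum>y\<in>V. edge_weight E w x y * f y * f y)
         - 2 * (\<Sum>x\<in>V. \<Sum>y\<in>V. edge_weight E w x y * f x * f y)"
    by (simp add: power2_eq_square algebra_simps sum.distrib sum_subtractf sum_distrib_left)
  also have "(\<Sum>x\<in>V. \<Sum>y\<in>V. edge_weight E w x y * f y * f y) = (\<Sum>x\<in>V. \<Sum>y\<in>V. edge_weight E w x y * f x * f x)"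
    by (subst sum.swap) (simp add: edge_weight_commute)
  also have "(\<Sum>x\<in>V. \<Sum>y\<in>V. edge_weight E w x y * f x * f x) = (\<Sum>x\<in>V. ?d x * f x * f x)"
    by (simp add: sum_distrib_right)
  finally show ?thesis using Q by simp
qed

lemma quad_form_laplacian_superset:
  assumes G: "wgraph V E w" and "V \<subseteq> U" "finite U"
  shows "quad_form V (laplacian V E w) f = (1/2) * (\<Sum>x\<in>U. \<Sum>y\<in>U. edge_weight E w x y * (f x - f y)\<^sup>2)"
proof -
  have "(\<Sum>x\<in>V. \<Sum>y\<in>V. edge_weight E w x y * (f x - f y)\<^sup>2) = (\<Sum>x\<in>U. \<Sum>y\<in>V. edge_weight E w x y * (f x - f y)\<^sup>2)"
    using assms edge_weight_eq_0[OF G] by (intro sum.mono_neutral_left) auto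
  also have "\<dots> = (\<Sum>x\<in>U. \<Sum>y\<in>U. edge_weight E w x y * (f x - f y)\<^sup>2)"
    using assms edge_weight_eq_0[OF G] by (intro sum.cong refl sum.mono_neutral_left) auto
  finally show ?thesis using quad_form_laplacian[OF G] by simp
qed

lemma edge_weight_average_le:
  assumes I: "finite I" and H: "\<forall>i\<in>I. EH i \<subseteq> E"
    and weights: "\<forall>e\<in>E. w e \<ge> c * (\<Sum>i\<in>{i\<in>I. e \<in> EH i}. wH i e)"
  shows "c * (\<Sum>i\<in>I. edge_weight (EH i) (wH i) x y) \<le> edge_weight E w x y"
proof (cases "{x, y} \<in> E")
  case True
  have "(\<Sum>i\<in>I. edge_weight (EH i) (wH i) x y) = (\<Sum>i\<in>{i\<in>I. {x, y} \<in> EH i}. wH i {x, y})"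
    unfolding edge_weight_def using I by (rule sum.inter_filter[symmetric])
  then show ?thesis using weights True unfolding edge_weight_def by auto
next
  case False
  then have "\<forall>i\<in>I. edge_weight (EH i) (wH i) x y = 0" using H unfolding edge_weight_def by auto
  then show ?thesis using False unfolding edge_weight_def by simp
qed

lemma quad_form_laplacian_average_le:
  assumes G: "wgraph V E w" and I: "finite I"
    and H: "\<forall>i\<in>I. wgraph (VH i) (EH i) (wH i) \<and> VH i \<subseteq> V \<and> EH i \<subseteq> E"
    and c: "c \<ge> 0" and weights: "\<forall>e\<in>E. w e \<ge> c * (\<Sum>i\<in>{i\<in>I. e \<in> EH i}. wH i e)"
  shows "c * (\<Sum>i\<in>I. quad_form (VH i) (laplacian (VH i) (EH i) (wH i)) f) \<le> quad_form V (laplacian V E w) f"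
proof -
  have fin: "finite V" using G unfolding wgraph_def by blast
  let ?D = "\<lambda>x y. (f x - f y)\<^sup>2"
  have "c * (\<Sum>i\<in>I. quad_form (VH i) (laplacian (VH i) (EH i) (wH i)) f)
      = c * (\<Sum>i\<in>I. (1/2) * (\<Sum>x\<in>V. \<Sum>y\<in>V. edge_weight (EH i) (wH i) x y * ?D x y))"
    using H quad_form_laplacian_superset[OF _ _ fin] by (intro arg_cong[where f = "\<lambda>a. c * a"] sum.cong refl) auto
  also have "\<dots> = (1/2) * (\<Sum>x\<in>V. \<Sum>y\<in>V. (c * (\<Sum>i\<in>I. edge_weight (EH i) (wH i) x y)) * ?D x y)"
    by (simp add: sum_distrib_left sum_distrib_right sum.swap[of _ I] mult_ac)
  also have "\<dots> \<le> (1/2) * (\<Sum>x\<in>V. \<Sum>y\<in>V. edge_weight E w x y * ?D x y)"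
    using edge_weight_average_le[OF I _ weights] H
    by (intro mult_left_mono sum_mono mult_right_mono) auto
  also have "\<dots> = quad_form V (laplacian V E w) f" using quad_form_laplacian[OF G] by simp
  finally show ?thesis .
qed

lemma sum_sum_cover:
  fixes g :: "'a \<Rightarrow> real"
  assumes V: "finite V" and I: "finite I" and S: "\<forall>i\<in>I. S i \<subseteq> V"
    and cover: "\<forall>x\<in>V. card {i\<in>I. x \<in> S i} = m"
  shows "(\<Sum>i\<in>I. \<Sum>x\<in>S i. g x) = real m * (\<Sum>x\<in>V. g x)"
proof -
  have "(\<Sum>i\<in>I. \<Sum>x\<in>S i. g x) = (\<Sum>i\<in>I. \<Sum>x\<in>V. if x \<in> S i then g x else 0)"
  proof (rule sum.cong[OF refl])
    fix i assume "i \<in> I"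
    then show "(\<Sum>x\<in>S i. g x) = (\<Sum>x\<in>V. if x \<in> S i then g x else 0)"
      using S sum.inter_restrict[OF V, of g "S i"] by (simp add: Int_absorb1 Int_absorb2)
  qed
  also have "\<dots> = (\<Sum>x\<in>V. \<Sum>i\<in>I. if x \<in> S i then g x else 0)" by (rule sum.swap)
  also have "\<dots> = (\<Sum>x\<in>V. real m * g x)"
    using cover I by (intro sum.cong refl) (simp add: sum.inter_filter[symmetric])
  finally show ?thesis by (simp add: sum_distrib_left)
qed

theorem theorem4p2:
  fixes V :: "'a set" and E :: "'a set set" and w :: "'a set \<Rightarrow> real"
    and k m :: nat
    and VH :: "nat \<Rightarrow> 'a set" and EH :: "nat \<Rightarrow> 'a set set" and wH :: "nat \<Rightarrow> 'a set \<Rightarrow> real"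
  assumes G: "wgraph V E w"
    and H: "\<forall>i\<in>{1..k}. wgraph (VH i) (EH i) (wH i) \<and> VH i \<subseteq> V \<and> EH i \<subseteq> E"
    and m_pos: "m > 0"
    and cond_i: "\<forall>x\<in>V. card {i\<in>{1..k}. x \<in> VH i} = m"
    and cond_ii: "\<forall>e\<in>E. w e \<ge> (1 / real m) * (\<Sum>i\<in>{i\<in>{1..k}. e \<in> EH i}. wH i e)"
    and t_pos: "t > 0"
  shows "(1 / real (card V)) * (\<Sum>x\<in>V. heat_return V E w t x)
     \<le> (1 / real (\<Sum>j=1..k. card (VH j))) *
        (\<Sum>i=1..k. \<Sum>x\<in>VH i. heat_return (VH i) (EH i) (wH i) t x)"
proof -
  have finV: "finite V" and finH: "\<And>i. i \<in> {1..k} \<Longrightarrow> finite (VH i)"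
    and subH: "\<forall>i\<in>{1..k}. VH i \<subseteq> V"
    using G H unfolding wgraph_def by auto
  have cover: "(\<Sum>i\<in>{1..k}. inner_on (VH i) f f) = real m * inner_on V f f" for f
    unfolding inner_on_def by (rule sum_sum_cover[OF finV _ subH cond_i]) simp
  have dominate: "real m * quad_form V (\<lambda>a b. - t * laplacian V E w a b) f
      \<le> (\<Sum>i\<in>{1..k}. quad_form (VH i) (\<lambda>a b. - t * laplacian (VH i) (EH i) (wH i) a b) f)" for f
  proof -
    have "(\<Sum>i\<in>{1..k}. quad_form (VH i) (laplacian (VH i) (EH i) (wH i)) f) \<le> real m * quad_form V (laplacian V E w) f"
      using quad_form_laplacian_average_le[OF G _ H _ cond_ii, of f] m_pos by (simp add: field_simps)
    then have "- t * (real m * quad_form V (laplacian V E w) f)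
        \<le> - t * (\<Sum>i\<in>{1..k}. quad_form (VH i) (laplacian (VH i) (EH i) (wH i)) f)"
      using t_pos by (intro mult_left_mono_neg) auto
    then show ?thesis unfolding quad_form_scale_matrix by (simp add: sum_distrib_left mult.left_commute)
  qed
  have "real m * (\<Sum>x\<in>V. heat_return V E w t x) \<le> (\<Sum>i=1..k. \<Sum>x\<in>VH i. heat_return (VH i) (EH i) (wH i) t x)"
    unfolding heat_return_def using finV finH subH m_pos cover dominate
    by (intro trace_mat_exp_le_average symmetric_on_scale symmetric_on_laplacian) auto
  moreover have "real (\<Sum>j=1..k. card (VH j)) = real m * real (card V)"
    using sum_sum_cover[OF finV _ subH cond_i, of "\<lambda>_. 1"] by simp
  ultimately show ?thesis using m_pos by (cases "card V = 0") (simp_all add: field_simps)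
qed

end
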